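(* Let $d\geq 2$ and let $\Lambda$ be any quantum channel (completely positive trace-preserving map) on $d\times d$ matrices. Let $|\Phi^{+}\rangle=\frac{1}{\sqrt d}\sum_{i=0}^{d-1}|ii\rangle\in\mathbb{C}^d\otimes\mathbb{C}^d$ and $\rho_{\Phi^+,\Lambda}=(\mathcal{I}\otimes\Lambda)(|\Phi^+\rangle\langle\Phi^+|)$. Then $$\mathbb{F}(\Lambda)\geq\lambda_{\max}(\rho_{\Phi^+,\Lambda}),$$ where $\lambda_{\max}$ denotes the largest eigenvalue.
   Context: For a pure state $|\psi\rangle\in\mathbb{C}^d\otimes\mathbb{C}^d$ and a channel $\Lambda$ acting on the second factor, $\rho_{\psi,\Lambda}=(\mathcal{I}\otimes\Lambda)(|\psi\rangle\langle\psi|)$. The singlet fraction of a two-qudit state $\rho$ is $\mathbb{F}(\rho)=\max_{|\Phi\rangle}\langle\Phi|\rho|\Phi\rangle$, the maximum over all maximally entangled states $|\Phi\rangle\in\mathbb{C}^d\otimes\mathbb{C}^d$. The maximum achievable singlet fraction is $\mathbb{F}^*(\rho)=\max_{L}\mathbb{F}(L(\rho))$, the maximum over all trace-preserving LOCC operations $L$ (local operations and classical communication between the two parties). The one-shot optimal singlet fraction of the channel is $\mathbb{F}(\Lambda)=\max_{|\psi\rangle}\mathbb{F}^*(\rho_{\psi,\Lambda})$, maximized over all pure states $|\psi\rangle\in\mathbb{C}^d\otimes\mathbb{C}^d$. *)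

theory Defs
  imports "Jordan_Normal_Form.Matrix" "Jordan_Normal_Form.Char_Poly"
begin

(* Conventions: C^a \<otimes> C^b is identified with C^(a*b), basis |i\<rangle>|j\<rangle> \<mapsto> index i*b+j
   (first factor = Alice, second factor = Bob). *)

definition kron :: "complex mat \<Rightarrow> complex mat \<Rightarrow> complex mat" where
  "kron A B = mat (dim_row A * dim_row B) (dim_col A * dim_col B)
     (\<lambda>(i,j). A $$ (i div dim_row B, j div dim_col B) * B $$ (i mod dim_row B, j mod dim_col B))"

definition adj :: "complex mat \<Rightarrow> complex mat" where
  "adj A = mat (dim_col A) (dim_row A) (\<lambda>(i,j). cnj (A $$ (j,i)))"

definition unit_mat :: "nat \<Rightarrow> nat \<Rightarrow> nat \<Rightarrow> complex mat" where
  "unit_mat n i j = mat n n (\<lambda>(k,l). if k = i \<and> l = j then 1 else 0)"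

definition block :: "nat \<Rightarrow> complex mat \<Rightarrow> nat \<Rightarrow> nat \<Rightarrow> complex mat" where
  "block b X i j = mat b b (\<lambda>(k,l). X $$ (i*b+k, j*b+l))"

definition id_tensor :: "nat \<Rightarrow> nat \<Rightarrow> (complex mat \<Rightarrow> complex mat) \<Rightarrow> complex mat \<Rightarrow> complex mat" where
  "id_tensor a b \<Lambda> X = (let b' = dim_row (\<Lambda> (0\<^sub>m b b)) in
     mat (a*b') (a*b') (\<lambda>(r,c). \<Lambda> (block b X (r div b') (c div b')) $$ (r mod b', c mod b')))"

definition mtrace :: "complex mat \<Rightarrow> complex" where
  "mtrace A = (\<Sum>i<dim_row A. A $$ (i,i))"

definition msum :: "nat \<Rightarrow> nat \<Rightarrow> nat \<Rightarrow> (nat \<Rightarrow> complex mat) \<Rightarrow> complex mat" where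
  "msum n r c f = mat r c (\<lambda>(i,j). \<Sum>k<n. f k $$ (i,j))"

definition psd :: "nat \<Rightarrow> complex mat \<Rightarrow> bool" where
  "psd n A \<longleftrightarrow> A \<in> carrier_mat n n \<and>
     (\<forall>v \<in> carrier_vec n. let q = (\<Sum>i<n. cnj (v $ i) * (A *\<^sub>v v) $ i) in q \<in> \<real> \<and> Re q \<ge> 0)"

definition quantum_channel :: "nat \<Rightarrow> (complex mat \<Rightarrow> complex mat) \<Rightarrow> bool" where
  "quantum_channel d \<Lambda> \<longleftrightarrow>
     (\<forall>X \<in> carrier_mat d d. \<Lambda> X \<in> carrier_mat d d) \<and>
     (\<forall>X \<in> carrier_mat d d. \<forall>Y \<in> carrier_mat d d. \<forall>s t::complex.
         \<Lambda> (s \<cdot>\<^sub>m X + t \<cdot>\<^sub>m Y) = s \<cdot>\<^sub>m \<Lambda> X + t \<cdot>\<^sub>m \<Lambda> Y) \<and>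
     (\<forall>k X. psd (k*d) X \<longrightarrow> psd (k*d) (id_tensor k d \<Lambda> X)) \<and>
     (\<forall>X \<in> carrier_mat d d. mtrace (\<Lambda> X) = mtrace X)"

definition proj :: "complex vec \<Rightarrow> complex mat" where
  "proj \<psi> = mat (dim_vec \<psi>) (dim_vec \<psi>) (\<lambda>(i,j). \<psi> $ i * cnj (\<psi> $ j))"

definition unit_vector :: "nat \<Rightarrow> complex vec \<Rightarrow> bool" where
  "unit_vector n v \<longleftrightarrow> v \<in> carrier_vec n \<and> (\<Sum>i<n. cmod (v $ i) ^ 2) = 1"

definition ptrace_B :: "nat \<Rightarrow> nat \<Rightarrow> complex mat \<Rightarrow> complex mat" where
  "ptrace_B a b X = mat a a (\<lambda>(i,j). \<Sum>k<b. X $$ (i*b+k, j*b+k))"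

definition max_entangled :: "nat \<Rightarrow> complex vec \<Rightarrow> bool" where
  "max_entangled d \<Phi> \<longleftrightarrow> unit_vector (d*d) \<Phi> \<and>
     ptrace_B d d (proj \<Phi>) = (1 / of_nat d) \<cdot>\<^sub>m 1\<^sub>m d"

definition expval :: "complex vec \<Rightarrow> complex mat \<Rightarrow> real" where
  "expval \<Phi> \<rho> = Re (\<Sum>i<dim_vec \<Phi>. cnj (\<Phi> $ i) * (\<rho> *\<^sub>v \<Phi>) $ i)"

definition singlet_fraction :: "nat \<Rightarrow> complex mat \<Rightarrow> real" where
  "singlet_fraction d \<rho> = (SUP \<Phi> \<in> {\<Phi>. max_entangled d \<Phi>}. expval \<Phi> \<rho>)"

(* Each round one party applies a local instrument given by Kraus
   operators K j (j < n, dimensions allowed to change) with \<Sum> K j^\<dagger> K j = 1, announces the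
   outcome j, and the protocol continues with an LOCC map L j depending on j. *)
inductive LOCC :: "nat \<Rightarrow> nat \<Rightarrow> nat \<Rightarrow> nat \<Rightarrow> (complex mat \<Rightarrow> complex mat) \<Rightarrow> bool" where
  LOCC_id: "LOCC a b a b (\<lambda>X. X)"
| LOCC_Alice: "\<lbrakk> \<forall>j<n. K j \<in> carrier_mat (a' j) a;
     msum n a a (\<lambda>j. adj (K j) * K j) = 1\<^sub>m a;
     \<forall>j<n. LOCC (a' j) b a'' b'' (L j) \<rbrakk> \<Longrightarrow>
     LOCC a b a'' b'' (\<lambda>X. msum n (a''*b'') (a''*b'') (\<lambda>j. L j (kron (K j) (1\<^sub>m b) * X * adj (kron (K j) (1\<^sub>m b)))))"
| LOCC_Bob: "\<lbrakk> \<forall>j<n. K j \<in> carrier_mat (b' j) b;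
     msum n b b (\<lambda>j. adj (K j) * K j) = 1\<^sub>m b;
     \<forall>j<n. LOCC a (b' j) a'' b'' (L j) \<rbrakk> \<Longrightarrow>
     LOCC a b a'' b'' (\<lambda>X. msum n (a''*b'') (a''*b'') (\<lambda>j. L j (kron (1\<^sub>m a) (K j) * X * adj (kron (1\<^sub>m a) (K j)))))"

definition max_singlet_fraction :: "nat \<Rightarrow> complex mat \<Rightarrow> real" where
  "max_singlet_fraction d \<rho> = (SUP L \<in> {L. LOCC d d d d L}. singlet_fraction d (L \<rho>))"

definition rho_state :: "nat \<Rightarrow> complex vec \<Rightarrow> (complex mat \<Rightarrow> complex mat) \<Rightarrow> complex mat" where
  "rho_state d \<psi> \<Lambda> = id_tensor d d \<Lambda> (proj \<psi>)"

definition channel_singlet_fraction :: "nat \<Rightarrow> (complex mat \<Rightarrow> complex mat) \<Rightarrow> real" where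
  "channel_singlet_fraction d \<Lambda> =
     (SUP \<psi> \<in> {\<psi>. unit_vector (d*d) \<psi>}. max_singlet_fraction d (rho_state d \<psi> \<Lambda>))"

definition phi_plus :: "nat \<Rightarrow> complex vec" where
  "phi_plus d = vec (d*d) (\<lambda>k. if k div d = k mod d then 1 / complex_of_real (sqrt (real d)) else 0)"

definition lambda_max :: "complex mat \<Rightarrow> real" where
  "lambda_max A = Max {x::real. eigenvalue A (complex_of_real x)}"

end

theory Submission
  imports Defs "Jordan_Normal_Form.Spectral_Radius"
begin

text \<open>
  Let \<open>\<rho> = (I \<otimes> \<Lambda>)(|\<Phi>\<^sup>+\<rangle>\<langle>\<Phi>\<^sup>+|)\<close>, which is \<open>1/d\<close> times the Choi matrix of \<open>\<Lambda>\<close>, and let \<open>\<chi>\<close> be a unit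
  eigenvector of \<open>\<rho>\<close> for its largest eigenvalue. Writing a vector of \<open>\<complex>\<^sup>d \<otimes> \<complex>\<^sup>d\<close> as a \<open>d \<times> d\<close>
  coefficient matrix, let \<open>\<psi>\<close> be the unit vector whose coefficient matrix is the adjoint of that
  of \<open>\<chi>\<close>. Expanding both sides in the Choi matrix gives
  \<open>\<langle>\<Phi>\<^sup>+|(I \<otimes> \<Lambda>)(|\<psi>\<rangle>\<langle>\<psi>|)|\<Phi>\<^sup>+\<rangle> = \<langle>\<chi>|\<rho>|\<chi>\<rangle> = \<lambda>\<^sub>m\<^sub>a\<^sub>x(\<rho>)\<close>. Since \<open>\<Phi>\<^sup>+\<close> is maximally
  entangled and doing nothing is an LOCC protocol, the chain of suprema defining \<open>\<bbbF>(\<Lambda>)\<close> is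
  bounded below by this number. The suprema are finite because LOCC protocols map states to
  states and the expectation value of a state in a unit vector is bounded.
\<close>

definition quad_form :: "nat \<Rightarrow> complex mat \<Rightarrow> complex vec \<Rightarrow> complex" where
  "quad_form n A v = (\<Sum>i<n. cnj (v $ i) * (A *\<^sub>v v) $ i)"

lemma psd_iff_quad_form:
  "psd n A \<longleftrightarrow> A \<in> carrier_mat n n \<and>
     (\<forall>v \<in> carrier_vec n. quad_form n A v \<in> \<real> \<and> Re (quad_form n A v) \<ge> 0)"
  unfolding psd_def quad_form_def Let_def ..

lemma psd_carrier: "psd n A \<Longrightarrow> A \<in> carrier_mat n n"
  unfolding psd_def by auto

lemma psd_quad_form:
  assumes "psd n A" "v \<in> carrier_vec n"
  shows "quad_form n A v \<in> \<real>" "Re (quad_form n A v) \<ge> 0"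
  using assms unfolding psd_iff_quad_form by auto

lemma expval_eq_quad_form: "expval \<Phi> \<rho> = Re (quad_form (dim_vec \<Phi>) \<rho> \<Phi>)"
  unfolding expval_def quad_form_def ..

lemma unit_vector_carrier: "unit_vector n v \<Longrightarrow> v \<in> carrier_vec n"
  unfolding unit_vector_def by simp

lemma pair_index_less: "i < (a::nat) \<Longrightarrow> j < b \<Longrightarrow> i * b + j < a * b"
proof -
  assume "i < a" "j < b"
  then have "i * b + j < Suc i * b" by simp
  also have "\<dots> \<le> a * b" using \<open>i < a\<close> by (intro mult_le_mono1) simp
  finally show ?thesis .
qed

lemma sum_lessThan_mult:
  fixes f :: "nat \<Rightarrow> 'a::comm_monoid_add"
  shows "(\<Sum>r<a*b. f r) = (\<Sum>i<a. \<Sum>j<b. f (i*b + j))"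
proof -
  have "(\<Sum>r<a*b. f r) = (\<Sum>i<a. sum f {i*b..<i*b + b})"
    using sum.nat_group[of f b a] by simp
  also have "\<dots> = (\<Sum>i<a. \<Sum>j<b. f (i*b + j))"
  proof (rule sum.cong[OF refl])
    fix i
    have "sum f {0 + i*b..<b + i*b} = (\<Sum>j = 0..<b. f (j + i*b))"
      by (rule sum.shift_bounds_nat_ivl)
    then show "sum f {i*b..<i*b + b} = (\<Sum>j<b. f (i*b + j))"
      by (simp add: add.commute atLeast0LessThan)
  qed
  finally show ?thesis .
qed

lemma sum_lessThan_single:
  "k < (n::nat) \<Longrightarrow> (\<And>i. i < n \<Longrightarrow> i \<noteq> k \<Longrightarrow> g i = 0) \<Longrightarrow> (\<Sum>i<n. g i) = g k"
  by (subst sum.remove[of _ k]) (auto intro!: sum.neutral)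

lemma mult_mat_vec_index_sum:
  "A \<in> carrier_mat n m \<Longrightarrow> dim_vec v = m \<Longrightarrow> i < n \<Longrightarrow> (A *\<^sub>v v) $ i = (\<Sum>k<m. A $$ (i,k) * v $ k)"
  by (auto simp: scalar_prod_def atLeast0LessThan)

lemma mult_mat_index_sum:
  "A \<in> carrier_mat n m \<Longrightarrow> B \<in> carrier_mat m k \<Longrightarrow> i < n \<Longrightarrow> j < k \<Longrightarrow>
   (A * B) $$ (i,j) = (\<Sum>l<m. A $$ (i,l) * B $$ (l,j))"
  by (auto simp: scalar_prod_def atLeast0LessThan)

lemma sum_two_point:
  fixes f :: "nat \<Rightarrow> 'a::semiring_1"
  assumes "i < n" "j < n" "i \<noteq> j"
  shows "(\<Sum>k<n. (if k = i then x else if k = j then y else 0) * f k) = x * f i + y * f j"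
proof -
  have "(\<Sum>k<n. (if k = i then x else if k = j then y else 0) * f k) =
      (\<Sum>k<n. (if k = i then x * f k else 0) + (if k = j then y * f k else 0))"
    using assms by (intro sum.cong refl) auto
  then show ?thesis using assms by (simp add: sum.distrib)
qed

lemma quad_form_two_point:
  assumes A: "A \<in> carrier_mat n n" and "i < n" "j < n" "i \<noteq> j"
  shows "quad_form n A (vec n (\<lambda>k. if k = i then 1 else if k = j then c else 0)) =
    A $$ (i,i) + c * A $$ (i,j) + cnj c * A $$ (j,i) + cnj c * c * A $$ (j,j)"
proof -
  let ?v = "vec n (\<lambda>k. if k = i then 1 else if k = j then c else 0)"
  have Av: "(A *\<^sub>v ?v) $ a = A $$ (a,i) + c * A $$ (a,j)" if "a < n" for a
  proof -
    have "(A *\<^sub>v ?v) $ a = (\<Sum>k<n. (if k = i then 1 else if k = j then c else 0) * A $$ (a,k))"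
      by (subst mult_mat_vec_index_sum[OF A _ that]) (auto simp: mult.commute intro!: sum.cong)
    then show ?thesis using sum_two_point[OF assms(2-4), of 1 c "\<lambda>k. A $$ (a,k)"] by simp
  qed
  have "quad_form n A ?v =
      (\<Sum>a<n. (if a = i then 1 else if a = j then cnj c else 0) * (A $$ (a,i) + c * A $$ (a,j)))"
    unfolding quad_form_def by (intro sum.cong refl) (simp add: Av)
  also have "\<dots> = A $$ (i,i) + c * A $$ (i,j) + cnj c * (A $$ (j,i) + c * A $$ (j,j))"
    using sum_two_point[OF assms(2-4), of 1 "cnj c" "\<lambda>a. A $$ (a,i) + c * A $$ (a,j)"] by simp
  finally show ?thesis by (simp add: algebra_simps)
qed

lemma psd_diag:
  assumes "psd n A" "i < n"
  shows "A $$ (i,i) = complex_of_real (Re (A $$ (i,i)))" "Re (A $$ (i,i)) \<ge> 0"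
proof -
  have A: "A \<in> carrier_mat n n" using psd_carrier[OF assms(1)] .
  have "quad_form n A (unit_vec n i) = cnj (unit_vec n i $ i) * (A *\<^sub>v unit_vec n i) $ i"
    unfolding quad_form_def by (rule sum_lessThan_single[OF assms(2)]) (simp add: unit_vec_def)
  then have "quad_form n A (unit_vec n i) = A $$ (i,i)" using A assms(2) by simp
  then have "A $$ (i,i) \<in> \<real>" "Re (A $$ (i,i)) \<ge> 0"
    using psd_quad_form[OF assms(1), of "unit_vec n i"] by auto
  then show "A $$ (i,i) = complex_of_real (Re (A $$ (i,i)))" "Re (A $$ (i,i)) \<ge> 0"
    by (auto simp: complex_is_Real_iff complex_eq_iff)
qed

lemma psd_offdiag_bound:
  assumes "psd n A" "i < n" "j < n"
  shows "cmod (A $$ (i,j)) \<le> Re (A $$ (i,i)) + Re (A $$ (j,j))"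
proof (cases "i = j")
  case True
  then show ?thesis using psd_diag[OF assms(1,2)] by (metis add_increasing2 norm_of_real abs_of_nonneg order_refl)
next
  case False
  txt \<open>Positivity on \<open>e\<^sub>i + c e\<^sub>j\<close> for \<open>c = \<plusminus>1, \<plusminus>\<i>\<close> bounds \<open>A\<^sub>i\<^sub>j + A\<^sub>j\<^sub>i\<close> and \<open>\<i>(A\<^sub>i\<^sub>j - A\<^sub>j\<^sub>i)\<close>.\<close>
  define P where "P = Re (A $$ (i,i)) + Re (A $$ (j,j))"
  define s where "s = A $$ (i,j) + A $$ (j,i)"
  define t where "t = \<i> * (A $$ (i,j) - A $$ (j,i))"
  have A: "A \<in> carrier_mat n n" using psd_carrier[OF assms(1)] .
  have shift: "of_real P + c * A $$ (i,j) + cnj c * A $$ (j,i) \<in> \<real> \<and>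
      Re (of_real P + c * A $$ (i,j) + cnj c * A $$ (j,i)) \<ge> 0" if "cnj c * c = 1" for c
  proof -
    have P: "of_real P = A $$ (i,i) + A $$ (j,j)"
      unfolding P_def using psd_diag(1)[OF assms(1,2)] psd_diag(1)[OF assms(1,3)] by simp
    have "quad_form n A (vec n (\<lambda>k. if k = i then 1 else if k = j then c else 0)) =
        of_real P + c * A $$ (i,j) + cnj c * A $$ (j,i)"
      unfolding quad_form_two_point[OF A assms(2,3) False] that P by (simp add: add_ac)
    then show ?thesis
      using psd_quad_form[OF assms(1), of "vec n (\<lambda>k. if k = i then 1 else if k = j then c else 0)"] by simp
  qed
  have bound: "cmod z \<le> P" if "of_real P + z \<in> \<real>" "Re (of_real P + z) \<ge> 0"
    "of_real P - z \<in> \<real>" "Re (of_real P - z) \<ge> 0" for z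
  proof -
    have "z \<in> \<real>" using that(1) by (metis Reals_diff Reals_of_real add_diff_cancel_left')
    then show ?thesis using that(2,4) by (auto simp: complex_is_Real_iff cmod_eq_Re)
  qed
  have "cmod s \<le> P" using shift[of 1] shift[of "-1"] unfolding s_def by (intro bound) (simp_all add: algebra_simps)
  moreover have "cmod t \<le> P" using shift[of "\<i>"] shift[of "-\<i>"] unfolding t_def
    by (intro bound) (simp_all add: algebra_simps)
  moreover have "2 * A $$ (i,j) = s - \<i> * t" unfolding s_def t_def by (simp add: algebra_simps)
  then have "2 * cmod (A $$ (i,j)) \<le> cmod s + cmod t"
    by (metis norm_mult norm_numeral norm_triangle_ineq4 norm_ii mult_1)
  ultimately show ?thesis unfolding P_def by simp
qed

lemma psd_entry_bound:
  assumes "psd n A" "mtrace A = 1" "i < n" "j < n"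
  shows "cmod (A $$ (i,j)) \<le> 2"
proof -
  have A: "A \<in> carrier_mat n n" using psd_carrier[OF assms(1)] .
  have diag_le: "Re (A $$ (k,k)) \<le> 1" if "k < n" for k
  proof -
    have "Re (A $$ (k,k)) \<le> (\<Sum>l<n. Re (A $$ (l,l)))"
      by (rule member_le_sum) (use that psd_diag(2)[OF assms(1)] in auto)
    also have "\<dots> = 1" using assms(2) A unfolding mtrace_def by (metis Re_sum one_complex.simps(1) carrier_matD(1))
    finally show ?thesis .
  qed
  show ?thesis using psd_offdiag_bound[OF assms(1,3,4)] diag_le[OF assms(3)] diag_le[OF assms(4)] by simp
qed

lemma unit_vector_entry_bound:
  assumes "unit_vector n v" "i < n"
  shows "cmod (v $ i) \<le> 1"
proof -
  have "cmod (v $ i) ^ 2 \<le> (\<Sum>k<n. cmod (v $ k) ^ 2)"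
    by (rule member_le_sum) (use assms(2) in auto)
  then show ?thesis using assms(1) unfolding unit_vector_def by (simp add: power_le_one_iff)
qed

text \<open>A crude bound; it only serves to make the suprema in the definitions finite.\<close>

lemma expval_state_bound:
  assumes "psd n A" "mtrace A = 1" "unit_vector n \<Phi>"
  shows "expval \<Phi> A \<le> 2 * real n ^ 2"
proof -
  have A: "A \<in> carrier_mat n n" using psd_carrier[OF assms(1)] .
  have dim: "dim_vec \<Phi> = n" using assms(3) unfolding unit_vector_def by auto
  have entry: "cmod (A $$ (i,k) * \<Phi> $ k) \<le> 2" if "i < n" "k < n" for i k
    using mult_mono[OF psd_entry_bound[OF assms(1,2) that] unit_vector_entry_bound[OF assms(3) that(2)]]
    by (simp add: norm_mult)
  have row: "cmod ((A *\<^sub>v \<Phi>) $ i) \<le> 2 * real n" if "i < n" for i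
  proof -
    have "cmod ((A *\<^sub>v \<Phi>) $ i) \<le> (\<Sum>k<n. cmod (A $$ (i,k) * \<Phi> $ k))"
      unfolding mult_mat_vec_index_sum[OF A dim that] by (rule norm_sum)
    also have "\<dots> \<le> (\<Sum>k<n. 2)" by (rule sum_mono) (use entry that in auto)
    finally show ?thesis by simp
  qed
  have summand: "cmod (cnj (\<Phi> $ i) * (A *\<^sub>v \<Phi>) $ i) \<le> 2 * real n" if "i < n" for i
    using mult_mono[OF unit_vector_entry_bound[OF assms(3) that] row[OF that]] by (simp add: norm_mult)
  have "expval \<Phi> A \<le> cmod (quad_form n A \<Phi>)"
    unfolding expval_eq_quad_form dim by (rule complex_Re_le_cmod)
  also have "\<dots> \<le> (\<Sum>i<n. cmod (cnj (\<Phi> $ i) * (A *\<^sub>v \<Phi>) $ i))"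
    unfolding quad_form_def by (rule norm_sum)
  also have "\<dots> \<le> (\<Sum>i<n. 2 * real n)" by (rule sum_mono) (use summand in auto)
  finally show ?thesis by (simp add: power2_eq_square)
qed
lemma adj_carrier: "M \<in> carrier_mat m n \<Longrightarrow> adj M \<in> carrier_mat n m"
  unfolding adj_def by auto

lemma adj_index: "M \<in> carrier_mat m n \<Longrightarrow> i < n \<Longrightarrow> j < m \<Longrightarrow> adj M $$ (i,j) = cnj (M $$ (j,i))"
  unfolding adj_def by auto

lemma adj_one: "adj (1\<^sub>m n) = 1\<^sub>m n"
  unfolding adj_def by (rule eq_matI) auto

lemma adj_mult_self_index:
  assumes M: "M \<in> carrier_mat m n" and "p < n" "q < n"
  shows "(adj M * M) $$ (p,q) = (\<Sum>i<m. cnj (M $$ (i,p)) * M $$ (i,q))"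
  using assms by (simp add: mult_mat_index_sum[OF adj_carrier[OF M] M] adj_index)

lemma sum_cnj_mult_mat_vec:
  assumes M: "M \<in> carrier_mat m n" and u: "u \<in> carrier_vec n" and v: "v \<in> carrier_vec m"
  shows "(\<Sum>i<m. cnj (v $ i) * (M *\<^sub>v u) $ i) = (\<Sum>k<n. cnj ((adj M *\<^sub>v v) $ k) * u $ k)"
proof -
  have "(\<Sum>i<m. cnj (v $ i) * (M *\<^sub>v u) $ i) = (\<Sum>i<m. \<Sum>k<n. cnj (v $ i) * M $$ (i,k) * u $ k)"
    using u by (auto simp: mult_mat_vec_index_sum[OF M] sum_distrib_left mult.assoc intro!: sum.cong)
  also have "\<dots> = (\<Sum>k<n. \<Sum>i<m. cnj (v $ i) * M $$ (i,k) * u $ k)" by (rule sum.swap)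
  also have "\<dots> = (\<Sum>k<n. cnj ((adj M *\<^sub>v v) $ k) * u $ k)"
  proof (rule sum.cong[OF refl])
    fix k assume "k \<in> {..<n}"
    then have "cnj ((adj M *\<^sub>v v) $ k) = (\<Sum>i<m. cnj (v $ i) * M $$ (i,k))"
      using v by (simp add: mult_mat_vec_index_sum[OF adj_carrier[OF M]] adj_index[OF M] mult.commute)
    then show "(\<Sum>i<m. cnj (v $ i) * M $$ (i,k) * u $ k) = cnj ((adj M *\<^sub>v v) $ k) * u $ k"
      by (simp add: sum_distrib_right)
  qed
  finally show ?thesis .
qed

lemma psd_conj_adj:
  assumes M: "M \<in> carrier_mat m n" and X: "psd n X"
  shows "psd m (M * X * adj M)"
  unfolding psd_iff_quad_form
proof (intro conjI ballI)
  have Xc: "X \<in> carrier_mat n n" using psd_carrier[OF X] .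
  show "M * X * adj M \<in> carrier_mat m m" using M Xc adj_carrier[OF M] by auto
  fix v :: "complex vec" assume v: "v \<in> carrier_vec m"
  define w where "w = adj M *\<^sub>v v"
  have w: "w \<in> carrier_vec n" unfolding w_def using adj_carrier[OF M] v by auto
  have MX: "M * X \<in> carrier_mat m n" using M Xc by simp
  have "M * X * adj M *\<^sub>v v = (M * X) *\<^sub>v w"
    unfolding w_def by (rule assoc_mult_mat_vec[OF MX adj_carrier[OF M] v])
  also have "\<dots> = M *\<^sub>v (X *\<^sub>v w)" by (rule assoc_mult_mat_vec[OF M Xc w])
  finally have "M * X * adj M *\<^sub>v v = M *\<^sub>v (X *\<^sub>v w)" .
  then have "quad_form m (M * X * adj M) v = quad_form n X w"
    unfolding quad_form_def w_def using sum_cnj_mult_mat_vec[OF M _ v, of "X *\<^sub>v w"] Xc w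
    by (simp add: w_def)
  then show "quad_form m (M * X * adj M) v \<in> \<real>" "0 \<le> Re (quad_form m (M * X * adj M) v)"
    using psd_quad_form[OF X w] by auto
qed

lemma msum_carrier: "msum n r c f \<in> carrier_mat r c"
  unfolding msum_def by auto

lemma msum_index: "i < r \<Longrightarrow> j < c \<Longrightarrow> msum n r c f $$ (i,j) = (\<Sum>k<n. f k $$ (i,j))"
  unfolding msum_def by auto

lemma msum_cong: "(\<And>j. j < n \<Longrightarrow> f j = g j) \<Longrightarrow> msum n r c f = msum n r c g"
  unfolding msum_def by (auto intro!: cong[of "mat r c"] sum.cong)

lemma mult_mat_vec_msum:
  assumes "\<forall>j<n. f j \<in> carrier_mat r r" "v \<in> carrier_vec r" "i < r"
  shows "(msum n r r f *\<^sub>v v) $ i = (\<Sum>j<n. (f j *\<^sub>v v) $ i)"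
proof -
  have "(msum n r r f *\<^sub>v v) $ i = (\<Sum>k<r. (\<Sum>j<n. f j $$ (i,k)) * v $ k)"
    using assms(2,3) by (auto simp: mult_mat_vec_index_sum[OF msum_carrier] msum_index intro!: sum.cong)
  also have "\<dots> = (\<Sum>j<n. \<Sum>k<r. f j $$ (i,k) * v $ k)"
    by (simp add: sum_distrib_right sum.swap[of _ "{..<r}"])
  also have "\<dots> = (\<Sum>j<n. (f j *\<^sub>v v) $ i)"
  proof (rule sum.cong[OF refl])
    fix j assume "j \<in> {..<n}"
    then show "(\<Sum>k<r. f j $$ (i,k) * v $ k) = (f j *\<^sub>v v) $ i"
      using assms mult_mat_vec_index_sum[of "f j" r r v i] by auto
  qed
  finally show ?thesis .
qed

lemma psd_msum:
  assumes "\<forall>j<n. psd r (f j)"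
  shows "psd r (msum n r r f)"
  unfolding psd_iff_quad_form
proof (intro conjI ballI)
  show "msum n r r f \<in> carrier_mat r r" by (rule msum_carrier)
  fix v :: "complex vec" assume v: "v \<in> carrier_vec r"
  have "\<forall>j<n. f j \<in> carrier_mat r r" using assms psd_carrier by blast
  then have "quad_form r (msum n r r f) v = (\<Sum>j<n. quad_form r (f j) v)"
    unfolding quad_form_def using v
    by (simp add: mult_mat_vec_msum sum_distrib_left sum.swap[of _ "{..<n}"])
  then show "quad_form r (msum n r r f) v \<in> \<real>" "0 \<le> Re (quad_form r (msum n r r f) v)"
    using assms psd_quad_form[OF _ v] by (auto intro: sum_in_Reals sum_nonneg simp: Re_sum)
qed

lemma mtrace_msum:
  assumes "\<forall>j<n. f j \<in> carrier_mat r r"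
  shows "mtrace (msum n r r f) = (\<Sum>j<n. mtrace (f j))"
proof -
  have "mtrace (msum n r r f) = (\<Sum>i<r. \<Sum>j<n. f j $$ (i,i))"
    unfolding mtrace_def using msum_carrier[of n r r f] by (simp add: msum_index)
  also have "\<dots> = (\<Sum>j<n. mtrace (f j))"
    unfolding mtrace_def using assms by (subst sum.swap) (auto intro!: sum.cong)
  finally show ?thesis .
qed

lemma mtrace_conj_adj:
  assumes M: "M \<in> carrier_mat m n" and X: "X \<in> carrier_mat n n"
  shows "mtrace (M * X * adj M) = (\<Sum>p<n. \<Sum>q<n. X $$ (q,p) * (adj M * M) $$ (p,q))"
proof -
  have MX: "M * X \<in> carrier_mat m n" using M X by simp
  have diag: "(M * X * adj M) $$ (i,i) = (\<Sum>p<n. \<Sum>q<n. M $$ (i,q) * X $$ (q,p) * cnj (M $$ (i,p)))"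
    if "i < m" for i
    using that by (simp add: mult_mat_index_sum[OF MX adj_carrier[OF M]] mult_mat_index_sum[OF M X]
        adj_index[OF M] sum_distrib_right)
  have "mtrace (M * X * adj M) = (\<Sum>i<m. \<Sum>p<n. \<Sum>q<n. M $$ (i,q) * X $$ (q,p) * cnj (M $$ (i,p)))"
    unfolding mtrace_def using M by (simp add: diag)
  also have "\<dots> = (\<Sum>p<n. \<Sum>q<n. \<Sum>i<m. M $$ (i,q) * X $$ (q,p) * cnj (M $$ (i,p)))"
    by (subst sum.swap, rule sum.cong[OF refl], rule sum.swap)
  also have "\<dots> = (\<Sum>p<n. \<Sum>q<n. X $$ (q,p) * (adj M * M) $$ (p,q))"
    by (auto simp: adj_mult_self_index[OF M] sum_distrib_left mult_ac intro!: sum.cong)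
  finally show ?thesis .
qed

lemma mtrace_kraus_sum:
  assumes M: "\<forall>j<n. M j \<in> carrier_mat (m j) N" and X: "X \<in> carrier_mat N N"
    and complete: "msum n N N (\<lambda>j. adj (M j) * M j) = 1\<^sub>m N"
  shows "(\<Sum>j<n. mtrace (M j * X * adj (M j))) = mtrace X"
proof -
  have "(\<Sum>j<n. mtrace (M j * X * adj (M j))) =
      (\<Sum>j<n. \<Sum>p<N. \<Sum>q<N. X $$ (q,p) * (adj (M j) * M j) $$ (p,q))"
    by (rule sum.cong[OF refl], rule mtrace_conj_adj) (use M X in auto)
  also have "\<dots> = (\<Sum>p<N. \<Sum>q<N. X $$ (q,p) * msum n N N (\<lambda>j. adj (M j) * M j) $$ (p,q))"
    by (subst sum.swap, rule sum.cong[OF refl], subst sum.swap)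
      (simp add: msum_index sum_distrib_left)
  also have "\<dots> = (\<Sum>p<N. X $$ (p,p))"
    unfolding complete by (simp add: if_distrib sum.delta cong: if_cong)
  also have "\<dots> = mtrace X" unfolding mtrace_def using X by simp
  finally show ?thesis .
qed
lemma kron_carrier_mat:
  "A \<in> carrier_mat ra ca \<Longrightarrow> B \<in> carrier_mat rb cb \<Longrightarrow> kron A B \<in> carrier_mat (ra * rb) (ca * cb)"
  unfolding kron_def by auto

lemma kron_index_divmod:
  "p < dim_row A * dim_row B \<Longrightarrow> q < dim_col A * dim_col B \<Longrightarrow>
   kron A B $$ (p,q) = A $$ (p div dim_row B, q div dim_col B) * B $$ (p mod dim_row B, q mod dim_col B)"
  unfolding kron_def by simp

lemma kron_index:
  "i1 < dim_row A \<Longrightarrow> i2 < dim_row B \<Longrightarrow> j1 < dim_col A \<Longrightarrow> j2 < dim_col B \<Longrightarrow>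
   kron A B $$ (i1 * dim_row B + i2, j1 * dim_col B + j2) = A $$ (i1,j1) * B $$ (i2,j2)"
  by (simp add: kron_index_divmod pair_index_less)

lemma divmod_less:
  assumes "p < a * (b::nat)"
  shows "p div b < a" "p mod b < b"
proof -
  have "b > 0" using assms by (cases b) auto
  then show "p div b < a" "p mod b < b" using assms by (auto simp: less_mult_imp_div_less)
qed

lemma adj_kron_mult:
  assumes A: "A \<in> carrier_mat rA cA" and B: "B \<in> carrier_mat rB cB"
  shows "adj (kron A B) * kron A B = kron (adj A * A) (adj B * B)"
proof (rule eq_matI)
  have K: "kron A B \<in> carrier_mat (rA * rB) (cA * cB)" using kron_carrier_mat[OF A B] .
  show "dim_row (adj (kron A B) * kron A B) = dim_row (kron (adj A * A) (adj B * B))"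
    "dim_col (adj (kron A B) * kron A B) = dim_col (kron (adj A * A) (adj B * B))"
    using adj_carrier[OF K] K A B adj_carrier[OF A] adj_carrier[OF B] by (simp_all add: kron_def)
  fix p q assume "p < dim_row (kron (adj A * A) (adj B * B))" "q < dim_col (kron (adj A * A) (adj B * B))"
  then have pq: "p < cA * cB" "q < cA * cB"
    using A B adj_carrier[OF A] adj_carrier[OF B] by (simp_all add: kron_def)
  define p1 p2 q1 q2 where "p1 = p div cB" "p2 = p mod cB" "q1 = q div cB" "q2 = q mod cB"
  have lt: "p1 < cA" "p2 < cB" "q1 < cA" "q2 < cB"
    unfolding p1_p2_q1_q2_def using divmod_less pq by blast+
  have "(adj (kron A B) * kron A B) $$ (p,q) =
      (\<Sum>r<rA * rB. cnj (kron A B $$ (r, p1*cB + p2)) * kron A B $$ (r, q1*cB + q2))"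
    using adj_mult_self_index[OF K pq] unfolding p1_p2_q1_q2_def by simp
  also have "\<dots> = (\<Sum>r1<rA. \<Sum>r2<rB. cnj (A $$ (r1,p1) * B $$ (r2,p2)) * (A $$ (r1,q1) * B $$ (r2,q2)))"
    unfolding sum_lessThan_mult using A B lt kron_index[of _ A _ B] by (intro sum.cong refl) simp
  also have "\<dots> = (\<Sum>r1<rA. cnj (A $$ (r1,p1)) * A $$ (r1,q1)) * (\<Sum>r2<rB. cnj (B $$ (r2,p2)) * B $$ (r2,q2))"
    by (simp add: sum_product mult_ac)
  also have "\<dots> = (adj A * A) $$ (p1,q1) * (adj B * B) $$ (p2,q2)"
    by (simp add: adj_mult_self_index[OF A] adj_mult_self_index[OF B] lt)
  also have "\<dots> = kron (adj A * A) (adj B * B) $$ (p,q)"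
    using pq adj_carrier[OF A] adj_carrier[OF B] A B unfolding p1_p2_q1_q2_def
    by (simp add: kron_index_divmod)
  finally show "(adj (kron A B) * kron A B) $$ (p,q) = kron (adj A * A) (adj B * B) $$ (p,q)" .
qed

lemma kron_one: "kron (1\<^sub>m a) (1\<^sub>m b) = 1\<^sub>m (a * b)"
proof (rule eq_matI)
  fix p q assume "p < dim_row (1\<^sub>m (a * b))" "q < dim_col (1\<^sub>m (a * b))"
  then have pq: "p < a * b" "q < a * b" by simp_all
  have "p = q" if "p div b = q div b" "p mod b = q mod b" using that by (metis div_mult_mod_eq)
  then show "kron (1\<^sub>m a) (1\<^sub>m b) $$ (p,q) = 1\<^sub>m (a * b) $$ (p,q)"
    using pq divmod_less[OF pq(1)] divmod_less[OF pq(2)] by (auto simp: kron_index_divmod)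
qed (simp_all add: kron_def)

lemma msum_kron_left:
  assumes "\<forall>j<n. F j \<in> carrier_mat a a" "G \<in> carrier_mat b b"
  shows "msum n (a*b) (a*b) (\<lambda>j. kron (F j) G) = kron (msum n a a F) G"
proof (rule eq_matI)
  fix p q assume "p < dim_row (kron (msum n a a F) G)" "q < dim_col (kron (msum n a a F) G)"
  then have pq: "p < a * b" "q < a * b" using assms(2) msum_carrier[of n a a F] by (simp_all add: kron_def)
  have "kron (F j) G $$ (p,q) = F j $$ (p div b, q div b) * G $$ (p mod b, q mod b)" if "j < n" for j
    using assms(1)[rule_format, OF that] assms(2) pq by (simp add: kron_index_divmod)
  then show "msum n (a*b) (a*b) (\<lambda>j. kron (F j) G) $$ (p,q) = kron (msum n a a F) G $$ (p,q)"
    using assms divmod_less[OF pq(1)] divmod_less[OF pq(2)] msum_carrier[of n a a F] pq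
    by (simp add: msum_index kron_index_divmod sum_distrib_right)
qed (use assms(2) msum_carrier[of n a a F] in \<open>simp_all add: kron_def msum_def\<close>)

lemma msum_kron_right:
  assumes "F \<in> carrier_mat a a" "\<forall>j<n. G j \<in> carrier_mat b b"
  shows "msum n (a*b) (a*b) (\<lambda>j. kron F (G j)) = kron F (msum n b b G)"
proof (rule eq_matI)
  fix p q assume "p < dim_row (kron F (msum n b b G))" "q < dim_col (kron F (msum n b b G))"
  then have pq: "p < a * b" "q < a * b" using assms(1) msum_carrier[of n b b G] by (simp_all add: kron_def)
  have "kron F (G j) $$ (p,q) = F $$ (p div b, q div b) * G j $$ (p mod b, q mod b)" if "j < n" for j
    using assms(1) assms(2)[rule_format, OF that] pq by (simp add: kron_index_divmod)
  then show "msum n (a*b) (a*b) (\<lambda>j. kron F (G j)) $$ (p,q) = kron F (msum n b b G) $$ (p,q)"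
    using assms divmod_less[OF pq(1)] divmod_less[OF pq(2)] msum_carrier[of n b b G] pq
    by (simp add: msum_index kron_index_divmod sum_distrib_left)
qed (use assms(1) msum_carrier[of n b b G] in \<open>simp_all add: kron_def msum_def\<close>)

lemma kraus_complete_kron_left:
  assumes K: "\<forall>j<n. K j \<in> carrier_mat (a' j) a"
    and complete: "msum n a a (\<lambda>j. adj (K j) * K j) = 1\<^sub>m a"
  shows "msum n (a*b) (a*b) (\<lambda>j. adj (kron (K j) (1\<^sub>m b)) * kron (K j) (1\<^sub>m b)) = 1\<^sub>m (a*b)"
proof -
  have "msum n (a*b) (a*b) (\<lambda>j. adj (kron (K j) (1\<^sub>m b)) * kron (K j) (1\<^sub>m b)) =
      msum n (a*b) (a*b) (\<lambda>j. kron (adj (K j) * K j) (1\<^sub>m b))"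
    using adj_kron_mult[OF K[rule_format] one_carrier_mat] by (intro msum_cong) (simp add: adj_one)
  also have "\<dots> = 1\<^sub>m (a*b)"
    using K by (subst msum_kron_left) (auto simp: complete kron_one intro: mult_carrier_mat adj_carrier)
  finally show ?thesis .
qed

lemma kraus_complete_kron_right:
  assumes K: "\<forall>j<n. K j \<in> carrier_mat (b' j) b"
    and complete: "msum n b b (\<lambda>j. adj (K j) * K j) = 1\<^sub>m b"
  shows "msum n (a*b) (a*b) (\<lambda>j. adj (kron (1\<^sub>m a) (K j)) * kron (1\<^sub>m a) (K j)) = 1\<^sub>m (a*b)"
proof -
  have "msum n (a*b) (a*b) (\<lambda>j. adj (kron (1\<^sub>m a) (K j)) * kron (1\<^sub>m a) (K j)) =
      msum n (a*b) (a*b) (\<lambda>j. kron (1\<^sub>m a) (adj (K j) * K j))"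
    using adj_kron_mult[OF one_carrier_mat K[rule_format]] by (intro msum_cong) (simp add: adj_one)
  also have "\<dots> = 1\<^sub>m (a*b)"
    using K by (subst msum_kron_right) (auto simp: complete kron_one intro: mult_carrier_mat adj_carrier)
  finally show ?thesis .
qed

lemma kraus_sum_preserves_states:
  assumes M: "\<forall>j<n. M j \<in> carrier_mat (m j) N"
    and complete: "msum n N N (\<lambda>j. adj (M j) * M j) = 1\<^sub>m N"
    and L: "\<And>j Y. j < n \<Longrightarrow> psd (m j) Y \<Longrightarrow> psd r (L j Y) \<and> mtrace (L j Y) = mtrace Y"
    and X: "psd N X"
  shows "psd r (msum n r r (\<lambda>j. L j (M j * X * adj (M j)))) \<and>
    mtrace (msum n r r (\<lambda>j. L j (M j * X * adj (M j)))) = mtrace X"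
proof -
  have out: "psd r (L j (M j * X * adj (M j))) \<and> mtrace (L j (M j * X * adj (M j))) = mtrace (M j * X * adj (M j))"
    if "j < n" for j
    using L[OF that psd_conj_adj[OF _ X]] M that by blast
  have "mtrace (msum n r r (\<lambda>j. L j (M j * X * adj (M j)))) = (\<Sum>j<n. mtrace (M j * X * adj (M j)))"
    using out psd_carrier by (simp add: mtrace_msum)
  also have "\<dots> = mtrace X" by (rule mtrace_kraus_sum[OF M psd_carrier[OF X] complete])
  finally show ?thesis using out by (simp add: psd_msum)
qed

lemma LOCC_preserves_states:
  "LOCC a b a' b' L \<Longrightarrow> psd (a*b) X \<Longrightarrow> psd (a'*b') (L X) \<and> mtrace (L X) = mtrace X"
proof (induction arbitrary: X rule: LOCC.induct)
  case (LOCC_id a b)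
  then show ?case by simp
next
  case (LOCC_Alice n K a' a b a'' b'' L)
  have M: "\<forall>j<n. kron (K j) (1\<^sub>m b) \<in> carrier_mat (a' j * b) (a * b)"
    using LOCC_Alice.hyps(1) by (auto intro: kron_carrier_mat)
  have IH: "psd (a'' * b'') (L j Y) \<and> mtrace (L j Y) = mtrace Y"
    if "j < n" "psd (a' j * b) Y" for j Y
    using LOCC_Alice.IH that by blast
  show ?case
    by (rule kraus_sum_preserves_states[OF M kraus_complete_kron_left[OF LOCC_Alice.hyps(1,2)] IH
          LOCC_Alice.prems])
next
  case (LOCC_Bob n K b' b a a'' b'' L)
  have M: "\<forall>j<n. kron (1\<^sub>m a) (K j) \<in> carrier_mat (a * b' j) (a * b)"
    using LOCC_Bob.hyps(1) by (auto intro: kron_carrier_mat)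
  have IH: "psd (a'' * b'') (L j Y) \<and> mtrace (L j Y) = mtrace Y"
    if "j < n" "psd (a * b' j) Y" for j Y
    using LOCC_Bob.IH that by blast
  show ?case
    by (rule kraus_sum_preserves_states[OF M kraus_complete_kron_right[OF LOCC_Bob.hyps(1,2)] IH
          LOCC_Bob.prems])
qed
lemma channel_carrier: "quantum_channel d \<Lambda> \<Longrightarrow> X \<in> carrier_mat d d \<Longrightarrow> \<Lambda> X \<in> carrier_mat d d"
  unfolding quantum_channel_def by blast

lemma channel_dims:
  "quantum_channel d \<Lambda> \<Longrightarrow> X \<in> carrier_mat d d \<Longrightarrow> dim_row (\<Lambda> X) = d"
  "quantum_channel d \<Lambda> \<Longrightarrow> X \<in> carrier_mat d d \<Longrightarrow> dim_col (\<Lambda> X) = d"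
  using channel_carrier by blast+

lemma channel_linear:
  "quantum_channel d \<Lambda> \<Longrightarrow> X \<in> carrier_mat d d \<Longrightarrow> Y \<in> carrier_mat d d \<Longrightarrow>
   \<Lambda> (s \<cdot>\<^sub>m X + t \<cdot>\<^sub>m Y) = s \<cdot>\<^sub>m \<Lambda> X + t \<cdot>\<^sub>m \<Lambda> Y"
  unfolding quantum_channel_def by blast

lemma channel_zero: assumes "quantum_channel d \<Lambda>" shows "\<Lambda> (0\<^sub>m d d) = 0\<^sub>m d d"
proof -
  have "\<Lambda> (0 \<cdot>\<^sub>m 0\<^sub>m d d + 0 \<cdot>\<^sub>m 0\<^sub>m d d) = 0 \<cdot>\<^sub>m \<Lambda> (0\<^sub>m d d) + 0 \<cdot>\<^sub>m \<Lambda> (0\<^sub>m d d)"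
    by (rule channel_linear[OF assms]) simp_all
  moreover have "0 \<cdot>\<^sub>m 0\<^sub>m d d + 0 \<cdot>\<^sub>m 0\<^sub>m d d = (0\<^sub>m d d :: complex mat)" by (rule eq_matI) auto
  moreover have "0 \<cdot>\<^sub>m \<Lambda> (0\<^sub>m d d) + 0 \<cdot>\<^sub>m \<Lambda> (0\<^sub>m d d) = 0\<^sub>m d d"
    using channel_carrier[OF assms zero_carrier_mat] by (intro eq_matI) auto
  ultimately show ?thesis by simp
qed

lemma msum_0: "msum 0 r c f = 0\<^sub>m r c"
  unfolding msum_def by (rule eq_matI) auto

lemma msum_Suc: "f m \<in> carrier_mat r c \<Longrightarrow> msum (Suc m) r c f = msum m r c f + f m"
  unfolding msum_def by (rule eq_matI) auto

lemma channel_msum: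
  assumes ch: "quantum_channel d \<Lambda>" and A: "\<forall>t<m. A t \<in> carrier_mat d d"
  shows "\<Lambda> (msum m d d (\<lambda>t. c t \<cdot>\<^sub>m A t)) = msum m d d (\<lambda>t. c t \<cdot>\<^sub>m \<Lambda> (A t))"
  using A
proof (induction m)
  case 0
  then show ?case by (simp add: msum_0 channel_zero[OF ch])
next
  case (Suc m)
  have Am: "A m \<in> carrier_mat d d" using Suc.prems by simp
  have one: "1 \<cdot>\<^sub>m M = M" for M :: "complex mat" by (rule eq_matI) auto
  have "\<Lambda> (msum (Suc m) d d (\<lambda>t. c t \<cdot>\<^sub>m A t)) = \<Lambda> (1 \<cdot>\<^sub>m msum m d d (\<lambda>t. c t \<cdot>\<^sub>m A t) + c m \<cdot>\<^sub>m A m)"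
    using Am by (simp add: msum_Suc one)
  also have "\<dots> = 1 \<cdot>\<^sub>m \<Lambda> (msum m d d (\<lambda>t. c t \<cdot>\<^sub>m A t)) + c m \<cdot>\<^sub>m \<Lambda> (A m)"
    by (rule channel_linear[OF ch msum_carrier Am])
  also have "\<dots> = msum (Suc m) d d (\<lambda>t. c t \<cdot>\<^sub>m \<Lambda> (A t))"
    using Suc channel_carrier[OF ch Am] by (simp add: msum_Suc one)
  finally show ?case .
qed

lemma mat_unit_expansion:
  assumes X: "X \<in> carrier_mat n n"
  shows "X = msum (n*n) n n (\<lambda>t. X $$ (t div n, t mod n) \<cdot>\<^sub>m unit_mat n (t div n) (t mod n))"
proof (rule eq_matI)
  fix i j assume "i < dim_row (msum (n*n) n n (\<lambda>t. X $$ (t div n, t mod n) \<cdot>\<^sub>m unit_mat n (t div n) (t mod n)))"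
    "j < dim_col (msum (n*n) n n (\<lambda>t. X $$ (t div n, t mod n) \<cdot>\<^sub>m unit_mat n (t div n) (t mod n)))"
  then have ij: "i < n" "j < n" using msum_carrier by (auto simp: msum_def)
  have "msum (n*n) n n (\<lambda>t. X $$ (t div n, t mod n) \<cdot>\<^sub>m unit_mat n (t div n) (t mod n)) $$ (i,j) =
      (\<Sum>k<n. \<Sum>l<n. if l = j then if k = i then X $$ (k,l) else 0 else 0)"
    unfolding msum_index[OF ij] sum_lessThan_mult using ij
    by (intro sum.cong refl) (auto simp: unit_mat_def)
  also have "\<dots> = X $$ (i,j)" using ij by (simp add: sum.delta)
  finally show "X $$ (i,j) = msum (n*n) n n (\<lambda>t. X $$ (t div n, t mod n) \<cdot>\<^sub>m unit_mat n (t div n) (t mod n)) $$ (i,j)"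
    by simp
qed (use X in \<open>auto simp: msum_def\<close>)

lemma unit_mat_carrier: "unit_mat n k l \<in> carrier_mat n n"
  unfolding unit_mat_def by simp

lemma channel_index_expansion:
  assumes ch: "quantum_channel n \<Lambda>" and X: "X \<in> carrier_mat n n" and ij: "i < n" "j < n"
  shows "\<Lambda> X $$ (i,j) = (\<Sum>k<n. \<Sum>l<n. X $$ (k,l) * \<Lambda> (unit_mat n k l) $$ (i,j))"
proof -
  have "\<Lambda> X = msum (n*n) n n (\<lambda>t. X $$ (t div n, t mod n) \<cdot>\<^sub>m \<Lambda> (unit_mat n (t div n) (t mod n)))"
    by (subst mat_unit_expansion[OF X]) (rule channel_msum[OF ch], simp add: unit_mat_carrier)
  also have "\<dots> $$ (i,j) = (\<Sum>k<n. \<Sum>l<n. (X $$ (k,l) \<cdot>\<^sub>m \<Lambda> (unit_mat n k l)) $$ (i,j))"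
    unfolding msum_index[OF ij] sum_lessThan_mult by (intro sum.cong refl) simp
  also have "\<dots> = (\<Sum>k<n. \<Sum>l<n. X $$ (k,l) * \<Lambda> (unit_mat n k l) $$ (i,j))"
    using ij by (simp add: channel_dims[OF ch] unit_mat_carrier)
  finally show ?thesis .
qed

lemma block_carrier: "block b X i j \<in> carrier_mat b b"
  unfolding block_def by auto

lemma id_tensor_carrier: "quantum_channel d \<Lambda> \<Longrightarrow> id_tensor a d \<Lambda> X \<in> carrier_mat (a*d) (a*d)"
  using channel_carrier[of d \<Lambda> "0\<^sub>m d d"] unfolding id_tensor_def Let_def by auto

lemma id_tensor_index:
  assumes "quantum_channel d \<Lambda>" "i < a" "j < a" "k < d" "l < d"
  shows "id_tensor a d \<Lambda> X $$ (i*d + k, j*d + l) = \<Lambda> (block d X i j) $$ (k,l)"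
  using assms channel_carrier[of d \<Lambda> "0\<^sub>m d d"] unfolding id_tensor_def Let_def
  by (simp add: pair_index_less)

lemma mtrace_id_tensor:
  assumes ch: "quantum_channel d \<Lambda>" and X: "X \<in> carrier_mat (a*d) (a*d)"
  shows "mtrace (id_tensor a d \<Lambda> X) = mtrace X"
proof -
  have "mtrace (id_tensor a d \<Lambda> X) = (\<Sum>i<a. \<Sum>k<d. id_tensor a d \<Lambda> X $$ (i*d + k, i*d + k))"
    unfolding mtrace_def using id_tensor_carrier[OF ch, of a X] by (simp add: sum_lessThan_mult)
  also have "\<dots> = (\<Sum>i<a. \<Sum>k<d. \<Lambda> (block d X i i) $$ (k,k))"
    by (intro sum.cong refl) (simp add: id_tensor_index[OF ch])
  also have "\<dots> = (\<Sum>i<a. mtrace (\<Lambda> (block d X i i)))"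
    unfolding mtrace_def by (simp add: channel_dims[OF ch] block_carrier)
  also have "\<dots> = (\<Sum>i<a. mtrace (block d X i i))"
    using ch block_carrier unfolding quantum_channel_def by auto
  also have "\<dots> = mtrace X"
    unfolding mtrace_def using X by (simp add: block_def sum_lessThan_mult)
  finally show ?thesis .
qed

lemma psd_proj:
  assumes \<psi>: "\<psi> \<in> carrier_vec n"
  shows "psd n (proj \<psi>)"
  unfolding psd_iff_quad_form
proof (intro conjI ballI)
  show P: "proj \<psi> \<in> carrier_mat n n" using \<psi> unfolding proj_def by auto
  fix v :: "complex vec" assume v: "v \<in> carrier_vec n"
  define z where "z = (\<Sum>i<n. cnj (v $ i) * \<psi> $ i)"
  have cz: "cnj z = (\<Sum>k<n. cnj (\<psi> $ k) * v $ k)" unfolding z_def by (simp add: mult.commute)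
  have "(proj \<psi> *\<^sub>v v) $ i = \<psi> $ i * cnj z" if "i < n" for i
  proof -
    have "(proj \<psi> *\<^sub>v v) $ i = (\<Sum>k<n. \<psi> $ i * (cnj (\<psi> $ k) * v $ k))"
      using \<psi> v that by (subst mult_mat_vec_index_sum[OF P]) (auto simp: proj_def intro!: sum.cong)
    then show ?thesis unfolding cz by (simp add: sum_distrib_left)
  qed
  then have "quad_form n (proj \<psi>) v = z * cnj z"
    unfolding quad_form_def z_def by (simp add: sum_distrib_right mult_ac)
  also have "\<dots> = of_real (cmod z ^ 2)" by (rule complex_norm_square[symmetric])
  finally show "quad_form n (proj \<psi>) v \<in> \<real>" "0 \<le> Re (quad_form n (proj \<psi>) v)" by simp_all
qed

lemma mtrace_proj: "mtrace (proj \<psi>) = of_real (\<Sum>i<dim_vec \<psi>. cmod (\<psi> $ i) ^ 2)"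
proof -
  have "mtrace (proj \<psi>) = (\<Sum>i<dim_vec \<psi>. \<psi> $ i * cnj (\<psi> $ i))" unfolding mtrace_def proj_def by simp
  also have "\<dots> = of_real (\<Sum>i<dim_vec \<psi>. cmod (\<psi> $ i) ^ 2)"
    by (simp only: complex_norm_square of_real_sum)
  finally show ?thesis .
qed

lemma rho_state_is_state:
  assumes ch: "quantum_channel d \<Lambda>" and \<psi>: "unit_vector (d*d) \<psi>"
  shows "psd (d*d) (rho_state d \<psi> \<Lambda>)" "mtrace (rho_state d \<psi> \<Lambda>) = 1"
proof -
  have P: "psd (d*d) (proj \<psi>)" by (rule psd_proj[OF unit_vector_carrier[OF \<psi>]])
  then show "psd (d*d) (rho_state d \<psi> \<Lambda>)"
    using ch unfolding rho_state_def quantum_channel_def by blast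
  have "dim_vec \<psi> = d*d" "(\<Sum>i<d*d. cmod (\<psi> $ i) ^ 2) = 1" using \<psi> unfolding unit_vector_def by auto
  then have "mtrace (proj \<psi>) = 1" unfolding mtrace_proj by simp
  then show "mtrace (rho_state d \<psi> \<Lambda>) = 1"
    using mtrace_id_tensor[OF ch psd_carrier[OF P]] unfolding rho_state_def by simp
qed
lemma channel_smult:
  assumes ch: "quantum_channel d \<Lambda>" and X: "X \<in> carrier_mat d d"
  shows "\<Lambda> (c \<cdot>\<^sub>m X) = c \<cdot>\<^sub>m \<Lambda> X"
proof -
  have "\<Lambda> (c \<cdot>\<^sub>m X + 0 \<cdot>\<^sub>m 0\<^sub>m d d) = c \<cdot>\<^sub>m \<Lambda> X + 0 \<cdot>\<^sub>m \<Lambda> (0\<^sub>m d d)"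
    by (rule channel_linear[OF ch X]) simp
  moreover have "c \<cdot>\<^sub>m X + 0 \<cdot>\<^sub>m 0\<^sub>m d d = c \<cdot>\<^sub>m X" using X by (intro eq_matI) auto
  moreover have "c \<cdot>\<^sub>m \<Lambda> X + 0 \<cdot>\<^sub>m \<Lambda> (0\<^sub>m d d) = c \<cdot>\<^sub>m \<Lambda> X"
    using channel_carrier[OF ch X] by (intro eq_matI) (auto simp: channel_zero[OF ch])
  ultimately show ?thesis by simp
qed

lemma phi_plus_dim: "dim_vec (phi_plus n) = n * n"
  unfolding phi_plus_def by simp

lemma phi_plus_index:
  "k < n \<Longrightarrow> i < n \<Longrightarrow> phi_plus n $ (k*n + i) = (if k = i then 1 / complex_of_real (sqrt (real n)) else 0)"
  unfolding phi_plus_def by (simp add: pair_index_less)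

lemma phi_plus_index_mult:
  assumes "k < n" "i < n" "l < n" "j < n"
  shows "cnj (phi_plus n $ (k*n + i)) * phi_plus n $ (l*n + j) = (if k = i \<and> l = j then 1 / of_nat n else 0)"
    "phi_plus n $ (k*n + i) * cnj (phi_plus n $ (l*n + j)) = (if k = i \<and> l = j then 1 / of_nat n else 0)"
proof -
  have "complex_of_real (sqrt (real n)) * complex_of_real (sqrt (real n)) = of_nat n"
    unfolding of_real_mult[symmetric] by simp
  then have "1 / complex_of_real (sqrt (real n)) * (1 / complex_of_real (sqrt (real n))) = 1 / of_nat n"
    by (simp add: divide_inverse inverse_mult_distrib[symmetric])
  then show "cnj (phi_plus n $ (k*n + i)) * phi_plus n $ (l*n + j) = (if k = i \<and> l = j then 1 / of_nat n else 0)"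
    "phi_plus n $ (k*n + i) * cnj (phi_plus n $ (l*n + j)) = (if k = i \<and> l = j then 1 / of_nat n else 0)"
    using assms by (simp_all add: phi_plus_index)
qed

lemma phi_plus_max_entangled:
  assumes "0 < n"
  shows "max_entangled n (phi_plus n)"
  unfolding max_entangled_def unit_vector_def
proof (intro conjI)
  show "phi_plus n \<in> carrier_vec (n*n)" by (simp add: phi_plus_def)
  have "complex_of_real (\<Sum>r<n*n. cmod (phi_plus n $ r) ^ 2) = (\<Sum>r<n*n. phi_plus n $ r * cnj (phi_plus n $ r))"
    by (simp only: of_real_sum complex_norm_square)
  also have "\<dots> = (\<Sum>k<n. \<Sum>i<n. phi_plus n $ (k*n+i) * cnj (phi_plus n $ (k*n+i)))"
    by (rule sum_lessThan_mult)
  also have "\<dots> = 1" using assms by (simp add: phi_plus_index_mult)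
  finally show "(\<Sum>r<n*n. cmod (phi_plus n $ r) ^ 2) = 1" by (simp only: of_real_eq_1_iff)
  show "ptrace_B n n (proj (phi_plus n)) = (1 / of_nat n) \<cdot>\<^sub>m 1\<^sub>m n"
    by (rule eq_matI) (auto simp: ptrace_B_def proj_def phi_plus_dim pair_index_less phi_plus_index_mult)
qed

lemma quad_form_pair_index:
  assumes Y: "Y \<in> carrier_mat (n*n) (n*n)" and u: "dim_vec u = n*n"
  shows "quad_form (n*n) Y u =
    (\<Sum>k<n. \<Sum>i<n. \<Sum>l<n. \<Sum>j<n. cnj (u $ (k*n+i)) * Y $$ (k*n+i, l*n+j) * u $ (l*n+j))"
proof -
  have Yu: "(Y *\<^sub>v u) $ r = (\<Sum>l<n. \<Sum>j<n. Y $$ (r, l*n+j) * u $ (l*n+j))" if "r < n*n" for r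
    unfolding mult_mat_vec_index_sum[OF Y u that] by (rule sum_lessThan_mult)
  show ?thesis
    unfolding quad_form_def sum_lessThan_mult
    by (intro sum.cong refl) (simp add: Yu pair_index_less sum_distrib_left mult.assoc)
qed

lemma quad_form_phi_plus:
  assumes Y: "Y \<in> carrier_mat (n*n) (n*n)"
  shows "quad_form (n*n) Y (phi_plus n) = (\<Sum>k<n. \<Sum>l<n. 1 / of_nat n * Y $$ (k*n+k, l*n+l))"
proof -
  let ?g = "\<lambda>k i l j. cnj (phi_plus n $ (k*n+i)) * Y $$ (k*n+i, l*n+j) * phi_plus n $ (l*n+j)"
  have "quad_form (n*n) Y (phi_plus n) = (\<Sum>k<n. \<Sum>l<n. \<Sum>j<n. ?g k k l j)"
    unfolding quad_form_pair_index[OF Y phi_plus_dim]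
    by (intro sum.cong refl sum_lessThan_single) (auto simp: phi_plus_index)
  also have "\<dots> = (\<Sum>k<n. \<Sum>l<n. ?g k k l l)"
    by (intro sum.cong refl sum_lessThan_single) (auto simp: phi_plus_index)
  also have "\<dots> = (\<Sum>k<n. \<Sum>l<n. 1 / of_nat n * Y $$ (k*n+k, l*n+l))"
  proof (intro sum.cong refl)
    fix k l assume "k \<in> {..<n}" "l \<in> {..<n}"
    then have "cnj (phi_plus n $ (k*n+k)) * phi_plus n $ (l*n+l) = 1 / of_nat n"
      by (simp add: phi_plus_index_mult)
    then show "?g k k l l = 1 / of_nat n * Y $$ (k*n+k, l*n+l)"
      by (metis mult.assoc mult.commute)
  qed
  finally show ?thesis .
qed

lemma block_proj_phi_plus:
  assumes "k < n" "l < n"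
  shows "block n (proj (phi_plus n)) k l = (1 / of_nat n) \<cdot>\<^sub>m unit_mat n k l"
  using assms by (intro eq_matI) (auto simp: block_def proj_def unit_mat_def phi_plus_dim
      pair_index_less phi_plus_index_mult(2))

lemma rho_state_phi_plus_index:
  assumes ch: "quantum_channel n \<Lambda>" and "k < n" "i < n" "l < n" "j < n"
  shows "rho_state n (phi_plus n) \<Lambda> $$ (k*n+i, l*n+j) = 1 / of_nat n * \<Lambda> (unit_mat n k l) $$ (i,j)"
  using assms unfolding rho_state_def
  by (simp add: id_tensor_index block_proj_phi_plus channel_smult unit_mat_carrier channel_dims)

lemma rho_state_carrier: "quantum_channel n \<Lambda> \<Longrightarrow> rho_state n \<psi> \<Lambda> \<in> carrier_mat (n*n) (n*n)"
  unfolding rho_state_def by (rule id_tensor_carrier)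

text \<open>The coefficient matrix of \<open>swap_conj n \<chi>\<close> is the adjoint of the coefficient matrix of \<open>\<chi>\<close>.\<close>

definition swap_conj :: "nat \<Rightarrow> complex vec \<Rightarrow> complex vec" where
  "swap_conj n \<chi> = vec (n*n) (\<lambda>r. cnj (\<chi> $ ((r mod n)*n + r div n)))"

lemma swap_conj_index: "k < n \<Longrightarrow> a < n \<Longrightarrow> swap_conj n \<chi> $ (k*n + a) = cnj (\<chi> $ (a*n + k))"
  unfolding swap_conj_def by (simp add: pair_index_less)

lemma unit_vector_swap_conj:
  assumes "unit_vector (n*n) \<chi>"
  shows "unit_vector (n*n) (swap_conj n \<chi>)"
proof -
  have "(\<Sum>r<n*n. cmod (swap_conj n \<chi> $ r) ^ 2) = (\<Sum>k<n. \<Sum>a<n. cmod (\<chi> $ (a*n+k)) ^ 2)"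
    unfolding sum_lessThan_mult by (intro sum.cong refl) (simp add: swap_conj_index)
  also have "\<dots> = (\<Sum>r<n*n. cmod (\<chi> $ r) ^ 2)" by (subst sum.swap) (simp add: sum_lessThan_mult)
  finally show ?thesis using assms unfolding unit_vector_def swap_conj_def by simp
qed

lemma rho_state_swap_conj_diag:
  assumes ch: "quantum_channel n \<Lambda>" and "k < n" "l < n"
  shows "rho_state n (swap_conj n \<chi>) \<Lambda> $$ (k*n+k, l*n+l) =
    (\<Sum>a<n. \<Sum>b<n. cnj (\<chi> $ (a*n+k)) * \<chi> $ (b*n+l) * \<Lambda> (unit_mat n a b) $$ (k,l))"
proof -
  have "rho_state n (swap_conj n \<chi>) \<Lambda> $$ (k*n+k, l*n+l) = \<Lambda> (block n (proj (swap_conj n \<chi>)) k l) $$ (k,l)"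
    unfolding rho_state_def using assms by (simp add: id_tensor_index)
  also have "\<dots> = (\<Sum>a<n. \<Sum>b<n. block n (proj (swap_conj n \<chi>)) k l $$ (a,b) * \<Lambda> (unit_mat n a b) $$ (k,l))"
    using assms by (simp add: channel_index_expansion block_carrier)
  also have "\<dots> = (\<Sum>a<n. \<Sum>b<n. cnj (\<chi> $ (a*n+k)) * \<chi> $ (b*n+l) * \<Lambda> (unit_mat n a b) $$ (k,l))"
    using assms by (intro sum.cong refl) (simp add: block_def proj_def swap_conj_def pair_index_less swap_conj_index)
  finally show ?thesis .
qed

lemma quad_form_phi_plus_swap_conj:
  assumes ch: "quantum_channel n \<Lambda>" and \<chi>: "dim_vec \<chi> = n*n"
  shows "quad_form (n*n) (rho_state n (swap_conj n \<chi>) \<Lambda>) (phi_plus n) =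
    quad_form (n*n) (rho_state n (phi_plus n) \<Lambda>) \<chi>"
proof -
  define g where "g a k b l = cnj (\<chi> $ (a*n+k)) * (1 / of_nat n * \<Lambda> (unit_mat n a b) $$ (k,l)) * \<chi> $ (b*n+l)"
    for a k b l
  have "quad_form (n*n) (rho_state n (swap_conj n \<chi>) \<Lambda>) (phi_plus n) = (\<Sum>k<n. \<Sum>l<n. \<Sum>a<n. \<Sum>b<n. g a k b l)"
    unfolding quad_form_phi_plus[OF rho_state_carrier[OF ch]] g_def
    by (intro sum.cong refl) (simp add: rho_state_swap_conj_diag[OF ch] sum_distrib_left mult_ac)
  also have "\<dots> = (\<Sum>k<n. \<Sum>a<n. \<Sum>l<n. \<Sum>b<n. g a k b l)"
    by (rule sum.cong[OF refl], rule sum.swap)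
  also have "\<dots> = (\<Sum>a<n. \<Sum>k<n. \<Sum>l<n. \<Sum>b<n. g a k b l)"
    by (rule sum.swap)
  also have "\<dots> = (\<Sum>a<n. \<Sum>k<n. \<Sum>b<n. \<Sum>l<n. g a k b l)"
    by (rule sum.cong[OF refl], rule sum.cong[OF refl], rule sum.swap)
  also have "\<dots> = quad_form (n*n) (rho_state n (phi_plus n) \<Lambda>) \<chi>"
    unfolding quad_form_pair_index[OF rho_state_carrier[OF ch] \<chi>] g_def
    by (intro sum.cong refl) (simp add: rho_state_phi_plus_index[OF ch])
  finally show ?thesis .
qed
lemma quad_form_eigenvector:
  assumes "v \<in> carrier_vec n" "A *\<^sub>v v = k \<cdot>\<^sub>v v"
  shows "quad_form n A v = k * of_real (\<Sum>i<n. cmod (v $ i) ^ 2)"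
proof -
  have "quad_form n A v = (\<Sum>i<n. k * (v $ i * cnj (v $ i)))"
    unfolding quad_form_def assms(2) using assms(1) by (intro sum.cong refl) (auto simp: mult_ac)
  then show ?thesis by (simp only: complex_norm_square of_real_sum sum_distrib_left)
qed

lemma sum_norm_sq_pos:
  assumes v: "v \<in> carrier_vec n" and nz: "v \<noteq> 0\<^sub>v n"
  shows "(\<Sum>i<n. cmod (v $ i) ^ 2) > 0"
proof -
  obtain i where i: "i < n" "v $ i \<noteq> 0"
    using v nz by (metis eq_vecI index_zero_vec carrier_vecD)
  have "cmod (v $ i) ^ 2 \<le> (\<Sum>i<n. cmod (v $ i) ^ 2)" by (rule member_le_sum) (use i in auto)
  moreover have "cmod (v $ i) ^ 2 > 0" using i by simp
  ultimately show ?thesis by linarith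
qed

lemma psd_eigenvalue_real:
  assumes A: "psd n A" and "eigenvalue A k"
  shows "k = of_real (Re k)"
proof -
  obtain v where v: "v \<in> carrier_vec n" "v \<noteq> 0\<^sub>v n" "A *\<^sub>v v = k \<cdot>\<^sub>v v"
    using assms psd_carrier[OF A] unfolding eigenvalue_def eigenvector_def by auto
  define s where "s = (\<Sum>i<n. cmod (v $ i) ^ 2)"
  have "s > 0" unfolding s_def by (rule sum_norm_sq_pos[OF v(1,2)])
  moreover have "k * of_real s \<in> \<real>"
    using psd_quad_form(1)[OF A v(1)] quad_form_eigenvector[OF v(1,3)] unfolding s_def by simp
  ultimately have "k \<in> \<real>"
    by (metis Reals_divide Reals_of_real nonzero_mult_div_cancel_right of_real_eq_0_iff order_less_irrefl)
  then show ?thesis by (auto simp: complex_is_Real_iff complex_eq_iff)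
qed

lemma unit_vector_normalize:
  assumes v: "v \<in> carrier_vec n" and nz: "v \<noteq> 0\<^sub>v n"
  shows "unit_vector n (complex_of_real (1 / sqrt (\<Sum>i<n. cmod (v $ i) ^ 2)) \<cdot>\<^sub>v v)"
proof -
  define s where "s = (\<Sum>i<n. cmod (v $ i) ^ 2)"
  have s: "s > 0" unfolding s_def by (rule sum_norm_sq_pos[OF v nz])
  have "(\<Sum>i<n. cmod ((complex_of_real (1 / sqrt s) \<cdot>\<^sub>v v) $ i) ^ 2) = (\<Sum>i<n. cmod (v $ i) ^ 2 / s)"
    using v s by (intro sum.cong refl) (simp add: norm_divide power_divide)
  also have "\<dots> = 1" using s unfolding s_def by (simp add: sum_divide_distrib[symmetric])
  finally show ?thesis using v unfolding unit_vector_def s_def by simp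
qed

lemma lambda_max_attained:
  assumes A: "psd n A" and n: "0 < n"
  shows "\<exists>\<chi>. unit_vector n \<chi> \<and> Re (quad_form n A \<chi>) = lambda_max A"
proof -
  have Ac: "A \<in> carrier_mat n n" using psd_carrier[OF A] .
  define E where "E = {x::real. eigenvalue A (complex_of_real x)}"
  have "E \<subseteq> Re ` spectrum A" unfolding E_def spectrum_def by force
  then have "finite E" using card_finite_spectrum(1)[OF Ac] by (meson finite_imageI finite_subset)
  moreover obtain k where "k \<in> spectrum A" using spectrum_non_empty[OF Ac n] by auto
  then have "Re k \<in> E" unfolding E_def spectrum_def using psd_eigenvalue_real[OF A] by auto
  ultimately have "lambda_max A \<in> E" unfolding lambda_max_def E_def[symmetric] by (intro Max_in) auto
  then obtain v where v: "v \<in> carrier_vec n" "v \<noteq> 0\<^sub>v n" "A *\<^sub>v v = of_real (lambda_max A) \<cdot>\<^sub>v v"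
    unfolding E_def eigenvalue_def eigenvector_def using Ac by auto
  define \<chi> where "\<chi> = complex_of_real (1 / sqrt (\<Sum>i<n. cmod (v $ i) ^ 2)) \<cdot>\<^sub>v v"
  have \<chi>: "unit_vector n \<chi>" unfolding \<chi>_def by (rule unit_vector_normalize[OF v(1,2)])
  have "A *\<^sub>v \<chi> = of_real (lambda_max A) \<cdot>\<^sub>v \<chi>"
    unfolding \<chi>_def using mult_mat_vec[OF Ac v(1)] v(3) by (simp add: smult_smult_assoc mult.commute)
  then have "quad_form n A \<chi> = of_real (lambda_max A)"
    using quad_form_eigenvector[OF unit_vector_carrier[OF \<chi>]] \<chi> unfolding unit_vector_def by simp
  then show ?thesis using \<chi> by auto
qed
lemma max_entangled_unit_vector: "max_entangled d \<Phi> \<Longrightarrow> unit_vector (d*d) \<Phi>"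
  unfolding max_entangled_def by simp

lemma expval_le_singlet_fraction:
  assumes "psd (d*d) \<rho>" "mtrace \<rho> = 1" "max_entangled d \<Phi>"
  shows "expval \<Phi> \<rho> \<le> singlet_fraction d \<rho>"
  unfolding singlet_fraction_def
proof (rule cSUP_upper)
  show "bdd_above ((\<lambda>\<Phi>. expval \<Phi> \<rho>) ` {\<Phi>. max_entangled d \<Phi>})"
    using expval_state_bound[OF assms(1,2)] max_entangled_unit_vector by (intro bdd_aboveI2) blast
qed (use assms(3) in simp)

lemma singlet_fraction_le:
  assumes "0 < d" "psd (d*d) \<rho>" "mtrace \<rho> = 1"
  shows "singlet_fraction d \<rho> \<le> 2 * real (d*d) ^ 2"
  unfolding singlet_fraction_def
proof (rule cSUP_least)
  show "{\<Phi>. max_entangled d \<Phi>} \<noteq> {}" using phi_plus_max_entangled[OF assms(1)] by blast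
qed (use expval_state_bound[OF assms(2,3)] max_entangled_unit_vector in blast)

lemma singlet_fraction_LOCC_le:
  assumes "0 < d" "psd (d*d) \<rho>" "mtrace \<rho> = 1" "LOCC d d d d L"
  shows "singlet_fraction d (L \<rho>) \<le> 2 * real (d*d) ^ 2"
  using LOCC_preserves_states[OF assms(4,2)] assms(3) by (intro singlet_fraction_le[OF assms(1)]) simp_all

lemma singlet_fraction_le_max_singlet_fraction:
  assumes "0 < d" "psd (d*d) \<rho>" "mtrace \<rho> = 1"
  shows "singlet_fraction d \<rho> \<le> max_singlet_fraction d \<rho>"
proof -
  have "singlet_fraction d ((\<lambda>X. X) \<rho>) \<le> max_singlet_fraction d \<rho>"
    unfolding max_singlet_fraction_def
  proof (rule cSUP_upper)
    show "bdd_above ((\<lambda>L. singlet_fraction d (L \<rho>)) ` {L. LOCC d d d d L})"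
      using singlet_fraction_LOCC_le[OF assms] by (intro bdd_aboveI2) simp
  qed (simp add: LOCC_id)
  then show ?thesis by simp
qed

lemma max_singlet_fraction_le:
  assumes "0 < d" "psd (d*d) \<rho>" "mtrace \<rho> = 1"
  shows "max_singlet_fraction d \<rho> \<le> 2 * real (d*d) ^ 2"
  unfolding max_singlet_fraction_def
proof (rule cSUP_least)
  show "{L. LOCC d d d d L} \<noteq> {}" using LOCC_id by blast
qed (use singlet_fraction_LOCC_le[OF assms] in simp)

lemma max_singlet_fraction_le_channel_singlet_fraction:
  assumes "0 < d" "quantum_channel d \<Lambda>" "unit_vector (d*d) \<psi>"
  shows "max_singlet_fraction d (rho_state d \<psi> \<Lambda>) \<le> channel_singlet_fraction d \<Lambda>"
  unfolding channel_singlet_fraction_def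
proof (rule cSUP_upper)
  show "bdd_above ((\<lambda>\<psi>. max_singlet_fraction d (rho_state d \<psi> \<Lambda>)) ` {\<psi>. unit_vector (d*d) \<psi>})"
    using max_singlet_fraction_le[OF assms(1)] rho_state_is_state[OF assms(2)]
    by (intro bdd_aboveI2) blast
qed (use assms(3) in simp)

theorem lemma2:
  fixes d :: nat and \<Lambda> :: "complex mat \<Rightarrow> complex mat"
  assumes "d \<ge> 2"
    and "quantum_channel d \<Lambda>"
  shows "channel_singlet_fraction d \<Lambda> \<ge> lambda_max (rho_state d (phi_plus d) \<Lambda>)"
proof -
  note ch = assms(2)
  have d: "0 < d" using assms(1) by simp
  have \<Phi>: "max_entangled d (phi_plus d)" by (rule phi_plus_max_entangled[OF d])
  obtain \<chi> where \<chi>: "unit_vector (d*d) \<chi>"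
    and eig: "Re (quad_form (d*d) (rho_state d (phi_plus d) \<Lambda>) \<chi>) = lambda_max (rho_state d (phi_plus d) \<Lambda>)"
    using lambda_max_attained[OF rho_state_is_state(1)[OF ch max_entangled_unit_vector[OF \<Phi>]]] d by auto
  define \<psi> where "\<psi> = swap_conj d \<chi>"
  have \<psi>: "unit_vector (d*d) \<psi>" unfolding \<psi>_def by (rule unit_vector_swap_conj[OF \<chi>])
  note state = rho_state_is_state[OF ch \<psi>]
  have "lambda_max (rho_state d (phi_plus d) \<Lambda>) = expval (phi_plus d) (rho_state d \<psi> \<Lambda>)"
    unfolding expval_eq_quad_form phi_plus_dim \<psi>_def eig[symmetric]
      quad_form_phi_plus_swap_conj[OF ch carrier_vecD[OF unit_vector_carrier[OF \<chi>]]] ..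
  also have "\<dots> \<le> singlet_fraction d (rho_state d \<psi> \<Lambda>)"
    by (rule expval_le_singlet_fraction[OF state \<Phi>])
  also have "\<dots> \<le> max_singlet_fraction d (rho_state d \<psi> \<Lambda>)"
    by (rule singlet_fraction_le_max_singlet_fraction[OF d state])
  also have "\<dots> \<le> channel_singlet_fraction d \<Lambda>"
    by (rule max_singlet_fraction_le_channel_singlet_fraction[OF d ch \<psi>])
  finally show ?thesis .
qed

end
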